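(* Let $0<p<1$ and let $X_p$ be a $\mathbb{P}^1(\mathbb{R})$-valued random variable satisfying $X_p \sim \frac{1}{X_p}+\epsilon_p$ with $\epsilon_p\sim\mathrm{Bernoulli}(p)$ independent of $X_p$. Then \[ \mathbb{E}\big[\log(X_p)\mathbf{1}_{\{X_p<1\}}\big]=(p-1)\,\mathbb{E}\big[\log(X_p)\mathbf{1}_{\{X_p>1\}}\big], \] \[ \mathbb{E}\big[\log(X_p)\mathbf{1}_{\{X_p>1\}}\big]=\frac1p\,\mathbb{E}[\log X_p], \qquad \mathbb{E}\big[\log(X_p)\mathbf{1}_{\{X_p<1\}}\big]=\frac{p-1}{p}\,\mathbb{E}[\log X_p]. \]
   Context: $\mathbb{P}^1(\mathbb{R})$ is identified with $\mathbb{R}\cup\{\infty\}$ (with $1/0=\infty$, $1/\infty=0$). $\epsilon_p\sim\mathrm{Bernoulli}(p)$ means $\mathbb{P}(\epsilon_p=1)=p$, $\mathbb{P}(\epsilon_p=0)=1-p$. The law of such $X_p$ is unique, atomless, $X_p\in(0,\infty)$ a.s., and $0<\mathbb{E}[\log X_p]<\infty$. *)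

theory Defs
  imports "HOL-Probability.Probability"
begin

text \<open>The real projective line P^1(R) = R \<union> {\<infinity>} is modelled as real option,
  with None playing the role of the point at infinity.\<close>

type_synonym P1 = "real option"

definition P1_borel :: "P1 measure" where
  "P1_borel = sigma UNIV ({Some ` B | B. B \<in> sets borel} \<union> {{None}})"

fun P1_inv :: "P1 \<Rightarrow> P1" where
  "P1_inv None = Some 0"
| "P1_inv (Some x) = (if x = 0 then None else Some (1 / x))"

fun P1_add :: "P1 \<Rightarrow> real \<Rightarrow> P1" where
  "P1_add None e = None"
| "P1_add (Some x) e = Some (x + e)"

end

theory Submission
  imports Defs
begin

text \<open>For \<open>x > 0\<close> the point \<open>Y = 1/x + \<epsilon>\<close> lies above 1 when \<open>\<epsilon> = 1\<close>, while for
  \<open>\<epsilon> = 0\<close> the inversion \<open>x \<mapsto> 1/x\<close> exchanges the parts of \<open>ln\<close> below and above 1.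
  Hence \<open>ln Y \<one>{Y<1} = (\<epsilon> - 1) ln X \<one>{X>1}\<close>, and since \<open>X\<close> and \<open>Y\<close> have the same law and
  \<open>\<epsilon>\<close> is independent of \<open>X\<close>, taking expectations gives \<open>L = (p - 1) G\<close> for the lower and
  upper parts \<open>L\<close>, \<open>G\<close> of \<open>E[ln X]\<close>. Together with \<open>E[ln X] = L + G\<close> this determines both.\<close>

lemma space_P1_borel [simp]: "space P1_borel = UNIV"
  unfolding P1_borel_def by (simp add: space_measure_of_conv)

lemma sets_P1_borel: "sets P1_borel = sigma_sets UNIV ({Some ` B | B. B \<in> sets borel} \<union> {{None}})"
  unfolding P1_borel_def by (subst sets_measure_of) auto

lemma Some_image_in_P1_borel: "B \<in> sets borel \<Longrightarrow> Some ` B \<in> sets P1_borel"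
  unfolding sets_P1_borel by (rule sigma_sets.Basic) auto

lemma None_in_P1_borel: "{None} \<in> sets P1_borel"
  unfolding sets_P1_borel by (rule sigma_sets.Basic) auto

lemma measurable_P1_case:
  fixes f :: "real \<Rightarrow> real"
  assumes f: "f \<in> borel_measurable borel"
  shows "(\<lambda>z. case z of None \<Rightarrow> c | Some x \<Rightarrow> f x) \<in> borel_measurable P1_borel"
proof (rule measurableI)
  fix A :: "real set" assume "A \<in> sets borel"
  then have "Some ` (f -` A) \<in> sets P1_borel"
    using measurable_sets[OF f] by (auto intro: Some_image_in_P1_borel)
  moreover have "(\<lambda>z. case z of None \<Rightarrow> c | Some x \<Rightarrow> f x) -` A \<inter> space P1_borel
      = Some ` (f -` A) \<union> (if c \<in> A then {None} else {})"
    by (auto split: option.splits)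
  ultimately show "(\<lambda>z. case z of None \<Rightarrow> c | Some x \<Rightarrow> f x) -` A \<inter> space P1_borel \<in> sets P1_borel"
    using sets.Un[OF _ None_in_P1_borel] by auto
qed auto

lemma measurable_P1_borelI:
  assumes None: "{\<omega>\<in>space M. f \<omega> = None} \<in> sets M"
    and val: "(\<lambda>\<omega>. case f \<omega> of None \<Rightarrow> 0 | Some x \<Rightarrow> x) \<in> borel_measurable M"
  shows "f \<in> measurable M P1_borel"
  unfolding P1_borel_def
proof (rule measurable_measure_of)
  fix A assume "A \<in> {Some ` B | B. B \<in> sets (borel::real measure)} \<union> {{None}}"
  then consider B where "A = Some ` B" "B \<in> sets (borel::real measure)" | "A = {None}"
    by blast
  then show "f -` A \<inter> space M \<in> sets M"
  proof cases
    case 1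
    then have "f -` A \<inter> space M = (space M - {\<omega>\<in>space M. f \<omega> = None}) \<inter>
        ((\<lambda>\<omega>. case f \<omega> of None \<Rightarrow> 0 | Some x \<Rightarrow> x) -` B \<inter> space M)"
      by (auto split: option.splits)
    then show ?thesis using None measurable_sets[OF val \<open>B \<in> sets borel\<close>] by auto
  next
    case 2
    then show ?thesis using None by (simp add: vimage_def Int_def conj_commute)
  qed
qed auto

lemma measurable_P1_inv: "P1_inv \<in> measurable P1_borel P1_borel"
proof (rule measurable_P1_borelI)
  have "P1_inv z = None \<longleftrightarrow> z \<in> Some ` {0}" for z
    by (cases z) auto
  then show "{z \<in> space P1_borel. P1_inv z = None} \<in> sets P1_borel"
    using Some_image_in_P1_borel[of "{0}"] by simp
  have "(\<lambda>z. case P1_inv z of None \<Rightarrow> 0 | Some x \<Rightarrow> x) = (\<lambda>z. case z of None \<Rightarrow> 0 | Some x \<Rightarrow> inverse x)"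
    by (auto split: option.splits simp: fun_eq_iff inverse_eq_divide)
  then show "(\<lambda>z. case P1_inv z of None \<Rightarrow> 0 | Some x \<Rightarrow> x) \<in> borel_measurable P1_borel"
    by (simp add: measurable_P1_case)
qed

lemma measurable_P1_add:
  assumes f: "f \<in> measurable M P1_borel" and e: "e \<in> borel_measurable M"
  shows "(\<lambda>\<omega>. P1_add (f \<omega>) (e \<omega>)) \<in> measurable M P1_borel"
proof (rule measurable_P1_borelI)
  have None: "{\<omega> \<in> space M. f \<omega> = None} \<in> sets M"
    using measurable_sets[OF f None_in_P1_borel] by (simp add: vimage_def Int_def conj_commute)
  moreover have "P1_add z r = None \<longleftrightarrow> z = None" for z r
    by (cases z) auto
  ultimately show "{\<omega> \<in> space M. P1_add (f \<omega>) (e \<omega>) = None} \<in> sets M"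
    by simp
  have val: "(\<lambda>\<omega>. case f \<omega> of None \<Rightarrow> 0 | Some x \<Rightarrow> x) \<in> borel_measurable M"
    using measurable_comp[OF f measurable_P1_case[of "\<lambda>x. x" 0]] by (simp add: comp_def)
  have "(\<lambda>\<omega>. case P1_add (f \<omega>) (e \<omega>) of None \<Rightarrow> 0 | Some x \<Rightarrow> x)
      = (\<lambda>\<omega>. if f \<omega> = None then 0 else (case f \<omega> of None \<Rightarrow> 0 | Some x \<Rightarrow> x) + e \<omega>)"
    by (auto split: option.splits simp: fun_eq_iff)
  also have "\<dots> \<in> borel_measurable M"
    using None val e by (intro measurable_If) auto
  finally show "(\<lambda>\<omega>. case P1_add (f \<omega>) (e \<omega>) of None \<Rightarrow> 0 | Some x \<Rightarrow> x) \<in> borel_measurable M" .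
qed

definition P1_ln :: "P1 \<Rightarrow> real" where
  "P1_ln z = (case z of Some x \<Rightarrow> ln x | None \<Rightarrow> 0)"

definition P1_ln_below_one :: "P1 \<Rightarrow> real" where
  "P1_ln_below_one z = (case z of Some x \<Rightarrow> ln x * indicator {..<1} x | None \<Rightarrow> 0)"

definition P1_ln_above_one :: "P1 \<Rightarrow> real" where
  "P1_ln_above_one z = (case z of Some x \<Rightarrow> ln x * indicator {1<..} x | None \<Rightarrow> 0)"

lemma borel_measurable_P1_ln:
  "P1_ln \<in> borel_measurable P1_borel"
  "P1_ln_below_one \<in> borel_measurable P1_borel"
  "P1_ln_above_one \<in> borel_measurable P1_borel"
  unfolding P1_ln_def[abs_def] P1_ln_below_one_def[abs_def] P1_ln_above_one_def[abs_def]
  by (rule measurable_P1_case; simp)+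

lemma P1_ln_eq_below_plus_above: "P1_ln z = P1_ln_below_one z + P1_ln_above_one z"
  by (auto simp: P1_ln_def P1_ln_below_one_def P1_ln_above_one_def indicator_def
      split: option.splits)

lemma abs_P1_ln_below_one_le: "\<bar>P1_ln_below_one z\<bar> \<le> \<bar>P1_ln z\<bar>"
  and abs_P1_ln_above_one_le: "\<bar>P1_ln_above_one z\<bar> \<le> \<bar>P1_ln z\<bar>"
  by (auto simp: P1_ln_def P1_ln_below_one_def P1_ln_above_one_def indicator_def
      split: option.splits)

lemma P1_ln_below_one_inv_add_Bernoulli:
  assumes "0 < x" and "e \<in> {0, 1}"
  shows "P1_ln_below_one (P1_add (P1_inv (Some x)) e) = (e - 1) * P1_ln_above_one (Some x)"
  using assms by (auto simp: P1_ln_below_one_def P1_ln_above_one_def indicator_def ln_div)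

lemma integral_eq_if_distr_eq:
  fixes g :: "'b \<Rightarrow> 'c::{banach, second_countable_topology}"
  assumes "X \<in> measurable M N" and "Y \<in> measurable M N"
    and "distr M N X = distr M N Y" and "g \<in> borel_measurable N"
  shows "(\<integral>\<omega>. g (X \<omega>) \<partial>M) = (\<integral>\<omega>. g (Y \<omega>) \<partial>M)"
  using assms by (metis integral_distr)

lemma Int_stable_vimage_sets: "Int_stable {h -` A \<inter> space M | A. A \<in> sets N}"
proof (rule Int_stableI)
  fix a b
  assume "a \<in> {h -` A \<inter> space M | A. A \<in> sets N}" "b \<in> {h -` A \<inter> space M | A. A \<in> sets N}"
  then obtain A B where "A \<in> sets N" "B \<in> sets N" "a = h -` A \<inter> space M" "b = h -` B \<inter> space M"
    by blast
  then show "a \<inter> b \<in> {h -` A \<inter> space M | A. A \<in> sets N}"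
    by (auto intro!: exI[of _ "A \<inter> B"])
qed

lemma (in prob_space) indep_var_compose_prob_product:
  assumes X: "random_variable S X" and Y: "random_variable T Y"
    and f: "f \<in> measurable S N" and g: "g \<in> measurable T N"
    and prod: "\<And>A B. A \<in> sets S \<Longrightarrow> B \<in> sets T \<Longrightarrow>
      prob {\<omega> \<in> space M. X \<omega> \<in> A \<and> Y \<omega> \<in> B}
        = prob {\<omega> \<in> space M. X \<omega> \<in> A} * prob {\<omega> \<in> space M. Y \<omega> \<in> B}"
  shows "indep_var N (\<lambda>\<omega>. f (X \<omega>)) N (\<lambda>\<omega>. g (Y \<omega>))"
proof -
  have fX: "random_variable N (\<lambda>\<omega>. f (X \<omega>))" and gY: "random_variable N (\<lambda>\<omega>. g (Y \<omega>))"
    using X Y f g by measurable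
  have "indep_set {(\<lambda>\<omega>. f (X \<omega>)) -` A \<inter> space M | A. A \<in> sets N}
      {(\<lambda>\<omega>. g (Y \<omega>)) -` B \<inter> space M | B. B \<in> sets N}"
    unfolding indep_sets2_eq
  proof (intro conjI ballI)
    show "{(\<lambda>\<omega>. f (X \<omega>)) -` A \<inter> space M | A. A \<in> sets N} \<subseteq> events"
      "{(\<lambda>\<omega>. g (Y \<omega>)) -` B \<inter> space M | B. B \<in> sets N} \<subseteq> events"
      using fX gY by (auto intro: measurable_sets)
    fix a b
    assume "a \<in> {(\<lambda>\<omega>. f (X \<omega>)) -` A \<inter> space M | A. A \<in> sets N}"
      "b \<in> {(\<lambda>\<omega>. g (Y \<omega>)) -` B \<inter> space M | B. B \<in> sets N}"
    then obtain A B where A: "A \<in> sets N" "a = {\<omega> \<in> space M. X \<omega> \<in> f -` A \<inter> space S}"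
      and B: "B \<in> sets N" "b = {\<omega> \<in> space M. Y \<omega> \<in> g -` B \<inter> space T}"
      using measurable_space[OF X] measurable_space[OF Y] by blast
    have ab: "a \<inter> b = {\<omega> \<in> space M. X \<omega> \<in> f -` A \<inter> space S \<and> Y \<omega> \<in> g -` B \<inter> space T}"
      using A B by auto
    show "prob (a \<inter> b) = prob a * prob b"
      unfolding ab unfolding A(2) B(2)
      by (rule prod[OF measurable_sets[OF f A(1)] measurable_sets[OF g B(1)]])
  qed
  then show ?thesis
    unfolding indep_var_eq using fX gY
    by (intro conjI indep_set_sigma_sets Int_stable_vimage_sets)
qed

lemma (in prob_space)
  assumes "e \<in> borel_measurable M" and "AE \<omega> in M. e \<omega> \<in> {0, 1}"
  shows integrable_Bernoulli: "integrable M e"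
    and expectation_Bernoulli: "expectation e = prob {\<omega> \<in> space M. e \<omega> = 1}"
proof -
  show "integrable M e"
    using assms by (intro integrable_const_bound[where B=1]) auto
  have event: "{\<omega> \<in> space M. e \<omega> = 1} \<in> events"
    using assms(1) by measurable
  moreover have "expectation e = expectation (indicator {\<omega> \<in> space M. e \<omega> = 1})"
    using assms(2) event
    by (intro integral_cong_AE) (auto simp: assms(1) indicator_def)
  ultimately show "expectation e = prob {\<omega> \<in> space M. e \<omega> = 1}"
    by simp
qed

lemma (in prob_space) integral_P1_ln_below_one_eq:
  assumes X: "X \<in> measurable M P1_borel" and eps: "eps \<in> borel_measurable M"
    and Bernoulli: "AE \<omega> in M. eps \<omega> \<in> {0, 1}"
    and indep: "\<And>A B. A \<in> sets P1_borel \<Longrightarrow> B \<in> sets borel \<Longrightarrow>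
      prob {\<omega> \<in> space M. X \<omega> \<in> A \<and> eps \<omega> \<in> B}
        = prob {\<omega> \<in> space M. X \<omega> \<in> A} * prob {\<omega> \<in> space M. eps \<omega> \<in> B}"
    and fixpt: "distr M P1_borel X = distr M P1_borel (\<lambda>\<omega>. P1_add (P1_inv (X \<omega>)) (eps \<omega>))"
    and pos: "AE \<omega> in M. \<exists>x>0. X \<omega> = Some x"
    and int_above: "integrable M (\<lambda>\<omega>. P1_ln_above_one (X \<omega>))"
  shows "(\<integral>\<omega>. P1_ln_below_one (X \<omega>) \<partial>M)
    = (prob {\<omega> \<in> space M. eps \<omega> = 1} - 1) * (\<integral>\<omega>. P1_ln_above_one (X \<omega>) \<partial>M)"
proof -
  have Y: "(\<lambda>\<omega>. P1_add (P1_inv (X \<omega>)) (eps \<omega>)) \<in> measurable M P1_borel"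
    using measurable_P1_add[OF measurable_comp[OF X measurable_P1_inv] eps] by (simp add: comp_def)
  have [measurable]: "(\<lambda>\<omega>. P1_ln_above_one (X \<omega>)) \<in> borel_measurable M"
    using measurable_comp[OF X borel_measurable_P1_ln(3)] by (simp add: comp_def)
  have indep_above: "indep_var borel (\<lambda>\<omega>. P1_ln_above_one (X \<omega>)) borel eps"
    by (rule indep_var_compose_prob_product[OF X eps borel_measurable_P1_ln(3)
          measurable_ident_sets[OF refl] indep])
  have "(\<integral>\<omega>. P1_ln_below_one (X \<omega>) \<partial>M)
      = (\<integral>\<omega>. P1_ln_below_one (P1_add (P1_inv (X \<omega>)) (eps \<omega>)) \<partial>M)"
    using X Y fixpt borel_measurable_P1_ln(2) by (rule integral_eq_if_distr_eq)
  also have "\<dots> = (\<integral>\<omega>. P1_ln_above_one (X \<omega>) * eps \<omega> - P1_ln_above_one (X \<omega>) \<partial>M)"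
  proof (rule integral_cong_AE)
    show "(\<lambda>\<omega>. P1_ln_below_one (P1_add (P1_inv (X \<omega>)) (eps \<omega>))) \<in> borel_measurable M"
      using measurable_comp[OF Y borel_measurable_P1_ln(2)] by (simp add: comp_def)
    show "(\<lambda>\<omega>. P1_ln_above_one (X \<omega>) * eps \<omega> - P1_ln_above_one (X \<omega>)) \<in> borel_measurable M"
      using eps by measurable
    show "AE \<omega> in M. P1_ln_below_one (P1_add (P1_inv (X \<omega>)) (eps \<omega>))
        = P1_ln_above_one (X \<omega>) * eps \<omega> - P1_ln_above_one (X \<omega>)"
      using pos Bernoulli
    proof eventually_elim
      case (elim \<omega>)
      then obtain x where "0 < x" "X \<omega> = Some x"
        by blast
      with elim show ?case
        using P1_ln_below_one_inv_add_Bernoulli[of x "eps \<omega>"] by (simp add: algebra_simps)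
    qed
  qed
  also have "\<dots> = (expectation eps - 1) * (\<integral>\<omega>. P1_ln_above_one (X \<omega>) \<partial>M)"
    using indep_var_lebesgue_integral[OF indep_above int_above integrable_Bernoulli[OF eps Bernoulli]]
      indep_var_integrable[OF indep_above int_above integrable_Bernoulli[OF eps Bernoulli]] int_above
    by (simp add: algebra_simps)
  finally show ?thesis
    using expectation_Bernoulli[OF eps Bernoulli] by simp
qed

theorem lemma3p2:
  fixes M :: "'a measure" and X :: "'a \<Rightarrow> P1" and eps :: "'a \<Rightarrow> real" and p :: real
  assumes "prob_space M"
    and "0 < p" and "p < 1"
    and X_rv: "X \<in> measurable M P1_borel"
    and eps_rv: "eps \<in> borel_measurable M"
    and eps_bern: "AE \<omega> in M. eps \<omega> \<in> {0, 1}"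
    and eps_p: "measure M {\<omega> \<in> space M. eps \<omega> = 1} = p"
    and indep: "\<forall>A\<in>sets P1_borel. \<forall>B\<in>sets (borel :: real measure).
       measure M {\<omega> \<in> space M. X \<omega> \<in> A \<and> eps \<omega> \<in> B}
         = measure M {\<omega> \<in> space M. X \<omega> \<in> A} * measure M {\<omega> \<in> space M. eps \<omega> \<in> B}"
    and fixpt: "distr M P1_borel X = distr M P1_borel (\<lambda>\<omega>. P1_add (P1_inv (X \<omega>)) (eps \<omega>))"
    and pos: "AE \<omega> in M. \<exists>x>0. X \<omega> = Some x"
    and integr: "integrable M (\<lambda>\<omega>. case X \<omega> of Some x \<Rightarrow> ln x | None \<Rightarrow> 0)"
  shows
    "(\<integral>\<omega>. (case X \<omega> of Some x \<Rightarrow> ln x * indicator {..<1} x | None \<Rightarrow> 0) \<partial>M)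
       = (p - 1) * (\<integral>\<omega>. (case X \<omega> of Some x \<Rightarrow> ln x * indicator {1<..} x | None \<Rightarrow> 0) \<partial>M)
     \<and> (\<integral>\<omega>. (case X \<omega> of Some x \<Rightarrow> ln x * indicator {1<..} x | None \<Rightarrow> 0) \<partial>M)
       = (1 / p) * (\<integral>\<omega>. (case X \<omega> of Some x \<Rightarrow> ln x | None \<Rightarrow> 0) \<partial>M)
     \<and> (\<integral>\<omega>. (case X \<omega> of Some x \<Rightarrow> ln x * indicator {..<1} x | None \<Rightarrow> 0) \<partial>M)
       = ((p - 1) / p) * (\<integral>\<omega>. (case X \<omega> of Some x \<Rightarrow> ln x | None \<Rightarrow> 0) \<partial>M)"
proof -
  interpret prob_space M by fact
  have int_ln: "integrable M (\<lambda>\<omega>. P1_ln (X \<omega>))"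
    using integr unfolding P1_ln_def .
  have int_below: "integrable M (\<lambda>\<omega>. P1_ln_below_one (X \<omega>))"
    and int_above: "integrable M (\<lambda>\<omega>. P1_ln_above_one (X \<omega>))"
    by (auto intro!: Bochner_Integration.integrable_bound[OF int_ln] AE_I2
        measurable_compose[OF X_rv] borel_measurable_P1_ln
        simp: abs_P1_ln_below_one_le abs_P1_ln_above_one_le)
  have below: "(\<integral>\<omega>. P1_ln_below_one (X \<omega>) \<partial>M) = (p - 1) * (\<integral>\<omega>. P1_ln_above_one (X \<omega>) \<partial>M)"
    using integral_P1_ln_below_one_eq[OF X_rv eps_rv eps_bern indep[rule_format] fixpt pos int_above]
    unfolding eps_p .
  have "(\<integral>\<omega>. P1_ln (X \<omega>) \<partial>M)
      = (\<integral>\<omega>. P1_ln_below_one (X \<omega>) \<partial>M) + (\<integral>\<omega>. P1_ln_above_one (X \<omega>) \<partial>M)"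
    using int_below int_above by (simp add: P1_ln_eq_below_plus_above)
  with below \<open>0 < p\<close>
  have above: "(\<integral>\<omega>. P1_ln_above_one (X \<omega>) \<partial>M) = 1 / p * (\<integral>\<omega>. P1_ln (X \<omega>) \<partial>M)"
    by (simp add: field_simps)
  show ?thesis
    using below above unfolding P1_ln_def P1_ln_below_one_def P1_ln_above_one_def
    by simp
qed

end
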